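(* Let $D$ be an API-domain and $S$ a multiplicatively closed subset of $D$ not containing $0$. Then the localization $D_S$ is an API-domain. If moreover $D$ is quasilocal, then so is $D_S$.
   Context: An API-domain is an integral domain in which for every nonempty subset $\{d_\alpha\}$ of nonzero elements there is a natural number $n$ with the ideal generated by $\{d_\alpha^n\}$ principal. Quasilocal: unique maximal ideal. *)

theory Defs
  imports "HOL-Computational_Algebra.Fraction_Field"
begin

text \<open>The domain D itself is the whole type (R = UNIV); the localization D_S is
  realised as the subring {a/s | a in D, s in S} of the fraction field of D.\<close>

definition ideal_in :: "'a::comm_ring_1 set \<Rightarrow> 'a set \<Rightarrow> bool" where
  "ideal_in R I \<longleftrightarrow> I \<subseteq> R \<and> 0 \<in> I \<and> (\<forall>x\<in>I. \<forall>y\<in>I. x + y \<in> I) \<and>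
     (\<forall>r\<in>R. \<forall>x\<in>I. r * x \<in> I)"

definition ideal_gen_in :: "'a::comm_ring_1 set \<Rightarrow> 'a set \<Rightarrow> 'a set" where
  "ideal_gen_in R X = {(\<Sum>x\<in>F. c x * x) | F c. finite F \<and> F \<subseteq> X \<and> (\<forall>x\<in>F. c x \<in> R)}"

definition principal_in :: "'a::comm_ring_1 set \<Rightarrow> 'a set \<Rightarrow> bool" where
  "principal_in R I \<longleftrightarrow> (\<exists>g\<in>R. I = {r * g | r. r \<in> R})"

definition API_on :: "'a::comm_ring_1 set \<Rightarrow> bool" where
  "API_on R \<longleftrightarrow> (\<forall>X. X \<noteq> {} \<longrightarrow> X \<subseteq> R - {0} \<longrightarrow>
     (\<exists>n::nat. n \<ge> 1 \<and> principal_in R (ideal_gen_in R ((\<lambda>d. d ^ n) ` X))))"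

definition maximal_ideal_in :: "'a::comm_ring_1 set \<Rightarrow> 'a set \<Rightarrow> bool" where
  "maximal_ideal_in R M \<longleftrightarrow> ideal_in R M \<and> M \<noteq> R \<and>
     (\<forall>J. ideal_in R J \<longrightarrow> M \<subseteq> J \<longrightarrow> J \<noteq> R \<longrightarrow> J = M)"

definition quasilocal_on :: "'a::comm_ring_1 set \<Rightarrow> bool" where
  "quasilocal_on R \<longleftrightarrow> (\<exists>!M. maximal_ideal_in R M)"

definition mult_closed :: "'a::comm_ring_1 set \<Rightarrow> bool" where
  "mult_closed S \<longleftrightarrow> 1 \<in> S \<and> (\<forall>a\<in>S. \<forall>b\<in>S. a * b \<in> S)"

definition localization :: "'a::idom set \<Rightarrow> 'a fract set" where
  "localization S = {Fract a s | a s. s \<in> S}"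

end

theory Submission
  imports Defs
begin

(* A set X of nonzero fractions a/s of D_S generates with its
   n-th powers the extension to D_S of the ideal of D generated by the n-th powers of the
   numerators a, because a^n/1 and (a/s)^n differ by the unit s^n of D_S; so a generator g of
   the latter yields the generator g/1 of the former.

   In a quasilocal API-domain the powers of any two elements are eventually comparable under
   divisibility: if (a^n, b^n) = (g), then the cofactors of a^n and b^n with respect to g
   generate the unit ideal, so one of them is a unit. Consequently, if neither a nor b divides
   an element of S, then neither does a t + b s, since a^n | b^n makes a divide (a t + b s)^(2n).
   These numerators are exactly those of the non-units of D_S, so the non-units of D_S form an
   ideal, which is then its unique maximal ideal. *)

definition subsemiring_in :: "'a::comm_ring_1 set \<Rightarrow> bool" where
  "subsemiring_in R \<longleftrightarrow> 0 \<in> R \<and> 1 \<in> R \<and> (\<forall>x\<in>R. \<forall>y\<in>R. x + y \<in> R \<and> x * y \<in> R)"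

definition nonunits_in :: "'a::comm_ring_1 set \<Rightarrow> 'a set" where
  "nonunits_in R = {x \<in> R. \<not> (\<exists>w\<in>R. x * w = 1)}"

lemma subsemiring_in_UNIV: "subsemiring_in UNIV"
  by (simp add: subsemiring_in_def)

lemma subsemiring_in_sum:
  assumes "subsemiring_in R" "finite F" "\<And>x. x \<in> F \<Longrightarrow> f x \<in> R"
  shows "sum f F \<in> R"
  using assms(2,3) by (induction F rule: finite_induct) (use assms(1) in \<open>auto simp: subsemiring_in_def\<close>)

lemma subsemiring_in_power: "subsemiring_in R \<Longrightarrow> x \<in> R \<Longrightarrow> x ^ n \<in> R"
  by (induction n) (auto simp: subsemiring_in_def)

lemma ideal_gen_in_mult_mem: "x \<in> X \<Longrightarrow> c \<in> R \<Longrightarrow> c * x \<in> ideal_gen_in R X"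
  unfolding ideal_gen_in_def by (intro CollectI exI[of _ "{x}"] exI[of _ "\<lambda>_. c"]) auto

lemma ideal_gen_in_least:
  assumes J: "ideal_in R J" and XJ: "X \<subseteq> J"
  shows "ideal_gen_in R X \<subseteq> J"
proof
  fix z assume "z \<in> ideal_gen_in R X"
  then obtain F c where z: "z = (\<Sum>x\<in>F. c x * x)" "finite F" "F \<subseteq> X" "\<forall>x\<in>F. c x \<in> R"
    unfolding ideal_gen_in_def by blast
  have "F \<subseteq> X \<longrightarrow> (\<forall>x\<in>F. c x \<in> R) \<longrightarrow> (\<Sum>x\<in>F. c x * x) \<in> J"
    using z(2) by (induction F rule: finite_induct) (use J XJ in \<open>auto simp: ideal_in_def\<close>)
  then show "z \<in> J" using z by blast
qed

lemma ideal_gen_in_ideal: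
  assumes R: "subsemiring_in R" and XR: "X \<subseteq> R"
  shows "ideal_in R (ideal_gen_in R X)"
  unfolding ideal_in_def
proof (intro conjI ballI)
  show "ideal_gen_in R X \<subseteq> R"
    using R XR by (auto simp: ideal_gen_in_def subsemiring_in_def intro!: subsemiring_in_sum)
  show "0 \<in> ideal_gen_in R X"
    unfolding ideal_gen_in_def by (intro CollectI exI[of _ "{}"]) auto
next
  fix a b assume "a \<in> ideal_gen_in R X" "b \<in> ideal_gen_in R X"
  then obtain F c G d where
    F: "a = (\<Sum>x\<in>F. c x * x)" "finite F" "F \<subseteq> X" "\<forall>x\<in>F. c x \<in> R" and
    G: "b = (\<Sum>x\<in>G. d x * x)" "finite G" "G \<subseteq> X" "\<forall>x\<in>G. d x \<in> R"
    unfolding ideal_gen_in_def by blast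
  define c' where "c' x = (if x \<in> F then c x else 0)" for x
  define d' where "d' x = (if x \<in> G then d x else 0)" for x
  have "a = (\<Sum>x\<in>F \<union> G. c' x * x)" "b = (\<Sum>x\<in>F \<union> G. d' x * x)"
    unfolding F(1) G(1) c'_def d'_def using F(2) G(2)
    by (auto intro!: sum.mono_neutral_cong_left)
  then have "a + b = (\<Sum>x\<in>F \<union> G. (c' x + d' x) * x)"
    by (simp add: sum.distrib distrib_right)
  moreover have "\<forall>x\<in>F \<union> G. c' x + d' x \<in> R"
    using F(4) G(4) R by (auto simp: c'_def d'_def subsemiring_in_def)
  ultimately show "a + b \<in> ideal_gen_in R X"
    unfolding ideal_gen_in_def using F G
    by (intro CollectI exI[of _ "F \<union> G"] exI[of _ "\<lambda>x. c' x + d' x"]) auto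
next
  fix r a assume r: "r \<in> R" and "a \<in> ideal_gen_in R X"
  then obtain F c where F: "a = (\<Sum>x\<in>F. c x * x)" "finite F" "F \<subseteq> X" "\<forall>x\<in>F. c x \<in> R"
    unfolding ideal_gen_in_def by blast
  have "r * a = (\<Sum>x\<in>F. (r * c x) * x)"
    unfolding F(1) by (simp add: sum_distrib_left mult.assoc)
  moreover have "\<forall>x\<in>F. r * c x \<in> R"
    using F(4) R r by (auto simp: subsemiring_in_def)
  ultimately show "r * a \<in> ideal_gen_in R X"
    unfolding ideal_gen_in_def using F by (intro CollectI exI[of _ F] exI[of _ "\<lambda>x. r * c x"]) auto
qed

lemma principal_ideal_in:
  assumes R: "subsemiring_in R" and g: "g \<in> R"
  shows "ideal_in R {r * g | r. r \<in> R}"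
  unfolding ideal_in_def
proof (intro conjI ballI)
  show "{r * g | r. r \<in> R} \<subseteq> R" "0 \<in> {r * g | r. r \<in> R}"
    using R g by (force simp: subsemiring_in_def)+
next
  fix x y assume "x \<in> {r * g | r. r \<in> R}" "y \<in> {r * g | r. r \<in> R}"
  then obtain r1 r2 where "r1 \<in> R" "r2 \<in> R" "x = r1 * g" "y = r2 * g" by blast
  then show "x + y \<in> {r * g | r. r \<in> R}"
    using R by (auto simp: subsemiring_in_def distrib_right intro!: exI[of _ "r1 + r2"])
next
  fix r x assume "r \<in> R" "x \<in> {r * g | r. r \<in> R}"
  then obtain r1 where "r1 \<in> R" "x = r1 * g" by blast
  then show "r * x \<in> {r * g | r. r \<in> R}"
    using R \<open>r \<in> R\<close> by (auto simp: subsemiring_in_def mult.assoc intro!: exI[of _ "r * r1"])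
qed

lemma principal_subset_ideal_in: "ideal_in R I \<Longrightarrow> g \<in> I \<Longrightarrow> {r * g | r. r \<in> R} \<subseteq> I"
  by (auto simp: ideal_in_def)

lemma ideal_in_eq_if_one_mem: "ideal_in R J \<Longrightarrow> 1 \<in> J \<Longrightarrow> J = R"
  unfolding ideal_in_def by (metis mult.right_neutral subsetI subset_antisym)

lemma proper_ideal_subset_nonunits:
  assumes J: "ideal_in R J" "J \<noteq> R"
  shows "J \<subseteq> nonunits_in R"
proof
  fix z assume z: "z \<in> J"
  have "w * z \<noteq> 1" if "w \<in> R" for w
    using ideal_in_eq_if_one_mem[OF J(1)] J z that unfolding ideal_in_def by metis
  then show "z \<in> nonunits_in R"
    using z J(1) by (auto simp: nonunits_in_def ideal_in_def mult.commute)
qed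

lemma ideal_in_Union_chain:
  assumes "C \<noteq> {}" and ideals: "\<And>J. J \<in> C \<Longrightarrow> ideal_in R J"
    and comparable: "\<And>J K. J \<in> C \<Longrightarrow> K \<in> C \<Longrightarrow> J \<subseteq> K \<or> K \<subseteq> J"
  shows "ideal_in R (\<Union>C)"
  unfolding ideal_in_def
proof (intro conjI ballI)
  show "\<Union>C \<subseteq> R" "0 \<in> \<Union>C"
    using assms(1) ideals unfolding ideal_in_def by blast+
  fix x y assume "x \<in> \<Union>C" "y \<in> \<Union>C"
  then obtain J K where "J \<in> C" "K \<in> C" "x \<in> J" "y \<in> K" by blast
  with comparable[of J K] have "x \<in> J \<union> K" "y \<in> J \<union> K" "J \<union> K \<in> C"
    by (auto simp: sup.absorb1 sup.absorb2)
  then show "x + y \<in> \<Union>C"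
    using ideals[of "J \<union> K"] unfolding ideal_in_def by blast
next
  fix r x assume "r \<in> R" "x \<in> \<Union>C"
  then obtain J where "J \<in> C" "x \<in> J" by blast
  then show "r * x \<in> \<Union>C"
    using ideals[of J] \<open>r \<in> R\<close> unfolding ideal_in_def by blast
qed

lemma maximal_ideal_in_superset:
  assumes "1 \<in> R" and J: "ideal_in R J" "1 \<notin> J"
  obtains M where "maximal_ideal_in R M" "J \<subseteq> M"
proof -
  define A where "A = {K. ideal_in R K \<and> J \<subseteq> K \<and> 1 \<notin> K}"
  have "\<Union>C \<in> A" if "C \<noteq> {}" "subset.chain A C" for C
  proof -
    have "ideal_in R (\<Union>C)"
      using that by (intro ideal_in_Union_chain) (auto simp: A_def subset_chain_def)
    then show ?thesis
      using that by (auto simp: A_def subset_chain_def)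
  qed
  moreover have "J \<in> A" using J by (simp add: A_def)
  ultimately obtain M where M: "M \<in> A" "\<And>K. K \<in> A \<Longrightarrow> M \<subseteq> K \<Longrightarrow> K = M"
    using subset_Zorn_nonempty[of A] by blast
  have "maximal_ideal_in R M"
    unfolding maximal_ideal_in_def
  proof (intro conjI allI impI)
    show "ideal_in R M" "M \<noteq> R"
      using M(1) \<open>1 \<in> R\<close> by (auto simp: A_def)
    fix K assume "ideal_in R K" "M \<subseteq> K" "K \<noteq> R"
    then show "K = M"
      using M ideal_in_eq_if_one_mem[of R K] by (auto simp: A_def)
  qed
  then show thesis using that M(1) by (simp add: A_def)
qed

lemma nonunits_subset_maximal_ideal:
  assumes R: "subsemiring_in R" and "quasilocal_on R" and M: "maximal_ideal_in R M"
  shows "nonunits_in R \<subseteq> M"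
proof
  fix x assume x: "x \<in> nonunits_in R"
  let ?xR = "{r * x | r. r \<in> R}"
  have "ideal_in R ?xR" using principal_ideal_in[OF R] x by (simp add: nonunits_in_def)
  moreover have "1 \<notin> ?xR" using x by (auto simp: nonunits_in_def mult.commute)
  moreover have "1 \<in> R" using R by (simp add: subsemiring_in_def)
  ultimately obtain M' where "maximal_ideal_in R M'" "?xR \<subseteq> M'"
    using maximal_ideal_in_superset by blast
  moreover have "x \<in> ?xR" using R by (force simp: subsemiring_in_def)
  ultimately show "x \<in> M"
    using \<open>quasilocal_on R\<close> M unfolding quasilocal_on_def by blast
qed

lemma quasilocal_on_iff_nonunits_ideal:
  assumes R: "subsemiring_in R"
  shows "quasilocal_on R \<longleftrightarrow> ideal_in R (nonunits_in R)"
proof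
  assume q: "quasilocal_on R"
  then obtain M where M: "maximal_ideal_in R M" unfolding quasilocal_on_def by blast
  then have "M \<subseteq> nonunits_in R"
    by (intro proper_ideal_subset_nonunits) (auto simp: maximal_ideal_in_def)
  with nonunits_subset_maximal_ideal[OF R q M] have "nonunits_in R = M" by blast
  then show "ideal_in R (nonunits_in R)" using M by (simp add: maximal_ideal_in_def)
next
  assume N: "ideal_in R (nonunits_in R)"
  have "nonunits_in R \<noteq> R" using R by (force simp: nonunits_in_def subsemiring_in_def)
  then have "maximal_ideal_in R M \<longleftrightarrow> M = nonunits_in R" for M
    using N proper_ideal_subset_nonunits unfolding maximal_ideal_in_def by blast
  then show "quasilocal_on R" unfolding quasilocal_on_def by blast
qed

lemma nonunits_ideal_if_add_closed:
  assumes R: "subsemiring_in R"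
    and add: "\<And>x y. x \<in> nonunits_in R \<Longrightarrow> y \<in> nonunits_in R \<Longrightarrow> x + y \<in> nonunits_in R"
  shows "ideal_in R (nonunits_in R)"
  unfolding ideal_in_def
proof (intro conjI ballI add)
  show "nonunits_in R \<subseteq> R" "0 \<in> nonunits_in R"
    using R by (auto simp: nonunits_in_def subsemiring_in_def)
  fix r x assume r: "r \<in> R" and x: "x \<in> nonunits_in R"
  have "r * x * w \<noteq> 1" if "w \<in> R" for w
  proof -
    have "r * w \<in> R" using r that R by (simp add: subsemiring_in_def)
    then show ?thesis using x by (auto simp: nonunits_in_def ac_simps)
  qed
  then show "r * x \<in> nonunits_in R"
    using r x R by (auto simp: nonunits_in_def subsemiring_in_def)
qed

lemma ideal_gen_in_pair_subset:
  "ideal_gen_in UNIV {a, b} \<subseteq> {u * a + v * b | u v. True}"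
proof (rule ideal_gen_in_least)
  show "ideal_in UNIV {u * a + v * b | u v. True}"
    unfolding ideal_in_def
  proof (intro conjI ballI)
    have "0 = 0 * a + 0 * b" by simp
    then show "0 \<in> {u * a + v * b | u v. True}" by blast
    fix x y assume "x \<in> {u * a + v * b | u v. True}" "y \<in> {u * a + v * b | u v. True}"
    then obtain u1 v1 u2 v2 where "x = u1 * a + v1 * b" "y = u2 * a + v2 * b" by blast
    then have "x + y = (u1 + u2) * a + (v1 + v2) * b" by (simp add: algebra_simps)
    then show "x + y \<in> {u * a + v * b | u v. True}" by blast
  next
    fix r x assume "x \<in> {u * a + v * b | u v. True}"
    then obtain u v where "x = u * a + v * b" by blast
    then have "r * x = (r * u) * a + (r * v) * b" by (simp add: algebra_simps)
    then show "r * x \<in> {u * a + v * b | u v. True}" by blast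
  qed simp
  have "a = 1 * a + 0 * b" "b = 0 * a + 1 * b" by simp_all
  then show "{a, b} \<subseteq> {u * a + v * b | u v. True}" by blast
qed

lemma quasilocal_on_unit_if_add_eq_one:
  fixes x y :: "'a::comm_ring_1"
  assumes "quasilocal_on (UNIV :: 'a set)" and "x + y = 1"
  shows "(\<exists>w. x * w = 1) \<or> (\<exists>w. y * w = 1)"
proof -
  have "ideal_in UNIV (nonunits_in (UNIV :: 'a set))"
    using assms(1) quasilocal_on_iff_nonunits_ideal[OF subsemiring_in_UNIV] by blast
  moreover have "1 \<notin> nonunits_in (UNIV :: 'a set)" by (auto simp: nonunits_in_def)
  ultimately have "x \<notin> nonunits_in UNIV \<or> y \<notin> nonunits_in UNIV"
    using assms(2) unfolding ideal_in_def by force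
  then show ?thesis by (auto simp: nonunits_in_def)
qed

lemma quasilocal_dvd_total_if_principal_pair:
  fixes a b :: "'a::idom"
  assumes q: "quasilocal_on (UNIV :: 'a set)" and "a \<noteq> 0"
    and g: "ideal_gen_in UNIV {a, b} = {r * g | r. r \<in> UNIV}"
  shows "a dvd b \<or> b dvd a"
proof -
  have "1 * a \<in> ideal_gen_in UNIV {a, b}" "1 * b \<in> ideal_gen_in UNIV {a, b}"
    by (rule ideal_gen_in_mult_mem; simp)+
  then obtain r s where r: "a = r * g" and s: "b = s * g"
    unfolding g by auto
  have "g = 1 * g" by simp
  then have "g \<in> ideal_gen_in UNIV {a, b}" unfolding g by blast
  then obtain u v where uv: "g = u * a + v * b"
    using ideal_gen_in_pair_subset by blast
  have "g \<noteq> 0" using r \<open>a \<noteq> 0\<close> by auto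
  moreover have "(u * r + v * s) * g = 1 * g" using uv r s by (simp add: algebra_simps)
  ultimately have "u * r + v * s = 1" by (simp only: mult_cancel_right) simp
  then consider w where "u * r * w = 1" | w where "v * s * w = 1"
    using quasilocal_on_unit_if_add_eq_one[OF q] by blast
  then show ?thesis
  proof cases
    case (1 w)
    have "b = s * g * (u * r * w)" using 1 s by simp
    also have "\<dots> = (s * u * w) * a" using r by (simp add: ac_simps)
    finally show ?thesis by auto
  next
    case (2 w)
    have "a = r * g * (v * s * w)" using 2 r by simp
    also have "\<dots> = (r * v * w) * b" using s by (simp add: ac_simps)
    finally show ?thesis by auto
  qed
qed

lemma API_quasilocal_dvd_powers:
  fixes a b :: "'a::idom"
  assumes api: "API_on (UNIV :: 'a set)" and q: "quasilocal_on (UNIV :: 'a set)"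
  shows "\<exists>n\<ge>1. a ^ n dvd b ^ n \<or> b ^ n dvd a ^ n"
proof (cases "a = 0 \<or> b = 0")
  case True
  then have "a ^ 1 dvd b ^ 1 \<or> b ^ 1 dvd a ^ 1" by auto
  then show ?thesis by blast
next
  case False
  then have "{a, b} \<noteq> {}" "{a, b} \<subseteq> UNIV - {0}" by auto
  then obtain n where n: "n \<ge> 1"
    and "principal_in UNIV (ideal_gen_in UNIV ((\<lambda>d. d ^ n) ` {a, b}))"
    using api[unfolded API_on_def, rule_format, of "{a, b}"] by blast
  then obtain g where "ideal_gen_in UNIV {a ^ n, b ^ n} = {r * g | r. r \<in> UNIV}"
    unfolding principal_in_def by auto
  then have "a ^ n dvd b ^ n \<or> b ^ n dvd a ^ n"
    using False by (intro quasilocal_dvd_total_if_principal_pair[OF q]) auto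
  then show ?thesis using n by blast
qed

lemma dvd_add_power_double:
  fixes a x y :: "'a::comm_semiring_1"
  assumes "a dvd x ^ n" "a dvd y ^ n"
  shows "a dvd (x + y) ^ (2 * n)"
proof -
  have "a dvd of_nat (2 * n choose k) * x ^ k * y ^ (2 * n - k)" for k
  proof (cases "k \<ge> n")
    case True
    then have "x ^ k = x ^ n * x ^ (k - n)" by (simp flip: power_add)
    then show ?thesis using assms(1) by (simp add: mult.left_commute)
  next
    case False
    then have "2 * n - k = n + (n - k)" by simp
    then have "y ^ (2 * n - k) = y ^ n * y ^ (n - k)" by (simp add: power_add)
    then show ?thesis using assms(2) by simp
  qed
  then show ?thesis unfolding binomial_ring by (intro dvd_sum)
qed

lemma mult_closed_power: "mult_closed S \<Longrightarrow> s \<in> S \<Longrightarrow> s ^ n \<in> S"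
  by (induction n) (auto simp: mult_closed_def)

lemma not_dvd_mult_closed_add_if_power_dvd:
  assumes S: "mult_closed S" and n: "n \<ge> 1" and ab: "a ^ n dvd b ^ n"
    and a: "\<forall>t\<in>S. \<not> a dvd t"
  shows "\<forall>t\<in>S. \<not> (a * x + b * y) dvd t"
proof (intro ballI notI)
  fix t assume t: "t \<in> S" and "(a * x + b * y) dvd t"
  have "a dvd a ^ n" using n by (simp add: dvd_power)
  then have "a dvd (a * x) ^ n" "a dvd (b * y) ^ n"
    using ab dvd_trans by (auto simp: power_mult_distrib)
  then have "a dvd (a * x + b * y) ^ (2 * n)" by (rule dvd_add_power_double)
  also have "\<dots> dvd t ^ (2 * n)" using \<open>(a * x + b * y) dvd t\<close> by (rule dvd_power_same)
  finally show False using a mult_closed_power[OF S t] by blast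
qed

lemma API_quasilocal_not_dvd_mult_closed_add:
  fixes a b :: "'a::idom"
  assumes "API_on (UNIV :: 'a set)" "quasilocal_on (UNIV :: 'a set)" "mult_closed S"
    and "\<forall>t\<in>S. \<not> a dvd t" "\<forall>t\<in>S. \<not> b dvd t"
  shows "\<forall>t\<in>S. \<not> (a * x + b * y) dvd t"
proof -
  obtain n where "n \<ge> 1" "a ^ n dvd b ^ n \<or> b ^ n dvd a ^ n"
    using API_quasilocal_dvd_powers[OF assms(1,2)] by blast
  then show ?thesis
    using not_dvd_mult_closed_add_if_power_dvd[OF assms(3), of n a b x y]
      not_dvd_mult_closed_add_if_power_dvd[OF assms(3), of n b a y x] assms(4,5)
    by (auto simp: add.commute)
qed

lemma Fract_power: "Fract (a::'a::idom) s ^ n = Fract (a ^ n) (s ^ n)"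
  by (induction n) (simp_all add: One_fract_def)

context
  fixes S :: "'a::idom set"
  assumes S: "mult_closed S" and zero_notin_S: "0 \<notin> S"
begin

lemma denominator_nonzero: "s \<in> S \<Longrightarrow> s \<noteq> 0"
  using zero_notin_S by auto

lemma Fract_mem_localization: "s \<in> S \<Longrightarrow> Fract a s \<in> localization S"
  unfolding localization_def by blast

lemma localizationE:
  assumes "x \<in> localization S"
  obtains a s where "x = Fract a s" "s \<in> S"
  using assms unfolding localization_def by blast

lemma Fract_1_mem_localization: "Fract a 1 \<in> localization S"
  using S by (simp add: Fract_mem_localization mult_closed_def)

lemma subsemiring_in_localization: "subsemiring_in (localization S)"
  unfolding subsemiring_in_def
proof (intro conjI ballI)
  show "0 \<in> localization S" "1 \<in> localization S"
    using Fract_1_mem_localization[of 0] Fract_1_mem_localization[of 1]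
    by (simp_all add: Zero_fract_def One_fract_def)
  fix x y assume "x \<in> localization S" "y \<in> localization S"
  then obtain a s b t where "x = Fract a s" "s \<in> S" "y = Fract b t" "t \<in> S"
    by (metis localizationE)
  moreover have "s * t \<in> S" using S \<open>s \<in> S\<close> \<open>t \<in> S\<close> by (simp add: mult_closed_def)
  ultimately show "x + y \<in> localization S" "x * y \<in> localization S"
    by (simp_all add: denominator_nonzero Fract_mem_localization)
qed

lemma Fract_nonunit_iff:
  assumes s: "s \<in> S"
  shows "Fract a s \<in> nonunits_in (localization S) \<longleftrightarrow> (\<forall>t\<in>S. \<not> a dvd t)"
proof -
  have "(\<exists>w\<in>localization S. Fract a s * w = 1) \<longleftrightarrow> (\<exists>t\<in>S. a dvd t)"
  proof
    assume "\<exists>w\<in>localization S. Fract a s * w = 1"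
    then obtain b t where t: "t \<in> S" "Fract a s * Fract b t = 1" by (metis localizationE)
    then have "a * b = s * t" using s by (simp add: denominator_nonzero One_fract_def eq_fract)
    moreover have "s * t \<in> S" using s t S by (simp add: mult_closed_def)
    ultimately show "\<exists>t\<in>S. a dvd t" by (metis dvd_triv_left)
  next
    assume "\<exists>t\<in>S. a dvd t"
    then obtain t c where t: "t \<in> S" "t = a * c" by blast
    then have "Fract a s * Fract (c * s) t = 1"
      using denominator_nonzero[OF s] denominator_nonzero[OF t(1)] by (simp add: One_fract_def eq_fract ac_simps)
    then show "\<exists>w\<in>localization S. Fract a s * w = 1"
      using t Fract_mem_localization by blast
  qed
  then show ?thesis using s by (auto simp: nonunits_in_def Fract_mem_localization)
qed

lemma ideal_in_contraction:
  assumes I: "ideal_in (localization S) I"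
  shows "ideal_in UNIV {a. Fract a 1 \<in> I}"
  unfolding ideal_in_def
proof (intro conjI ballI)
  show "0 \<in> {a. Fract a 1 \<in> I}" using I by (simp add: ideal_in_def flip: Zero_fract_def)
  fix x y assume "x \<in> {a. Fract a 1 \<in> I}" "y \<in> {a. Fract a 1 \<in> I}"
  then have "Fract x 1 + Fract y 1 \<in> I" using I unfolding ideal_in_def by blast
  then show "x + y \<in> {a. Fract a 1 \<in> I}" by simp
next
  fix r x assume "x \<in> {a. Fract a 1 \<in> I}"
  then have "Fract r 1 * Fract x 1 \<in> I"
    using I Fract_1_mem_localization unfolding ideal_in_def by blast
  then show "r * x \<in> {a. Fract a 1 \<in> I}" by simp
qed simp

lemma localization_ideal_gen_in_powers:
  assumes X: "X \<subseteq> localization S"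
    and g: "ideal_gen_in UNIV ((\<lambda>d. d ^ n) ` {a. \<exists>s\<in>S. Fract a s \<in> X}) = {r * g | r. r \<in> UNIV}"
  shows "ideal_gen_in (localization S) ((\<lambda>d. d ^ n) ` X) = {r * Fract g 1 | r. r \<in> localization S}"
    (is "?I = ?J")
proof
  let ?Y = "{a. \<exists>s\<in>S. Fract a s \<in> X}"
  have I: "ideal_in (localization S) ?I"
    using X subsemiring_in_localization
    by (auto intro!: ideal_gen_in_ideal subsemiring_in_power)
  show "?I \<subseteq> ?J"
  proof (intro ideal_gen_in_least principal_ideal_in subsemiring_in_localization Fract_1_mem_localization subsetI)
    fix z assume "z \<in> (\<lambda>d. d ^ n) ` X"
    then obtain x where x: "x \<in> X" "z = x ^ n" by blast
    then obtain a s where "x = Fract a s" "s \<in> S"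
      using X localizationE by blast
    with x have as: "s \<in> S" "Fract a s \<in> X" "z = Fract a s ^ n" by simp_all
    then have "1 * a ^ n \<in> ideal_gen_in UNIV ((\<lambda>d. d ^ n) ` ?Y)"
      by (intro ideal_gen_in_mult_mem) auto
    then obtain r where "a ^ n = r * g" unfolding g by auto
    then have "z = Fract r (s ^ n) * Fract g 1" using as by (simp add: Fract_power)
    moreover have "Fract r (s ^ n) \<in> localization S"
      using S as(1) by (simp add: Fract_mem_localization mult_closed_power)
    ultimately show "z \<in> ?J" by blast
  qed
  have "(\<lambda>d. d ^ n) ` ?Y \<subseteq> {a. Fract a 1 \<in> ?I}"
  proof
    fix z assume "z \<in> (\<lambda>d. d ^ n) ` ?Y"
    then obtain a s where as: "s \<in> S" "Fract a s \<in> X" "z = a ^ n" by auto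
    then have "Fract z 1 = Fract (s ^ n) 1 * Fract a s ^ n"
      using denominator_nonzero[OF as(1)] by (simp add: Fract_power eq_fract)
    moreover have "Fract (s ^ n) 1 * Fract a s ^ n \<in> ?I"
      using as(2) by (intro ideal_gen_in_mult_mem Fract_1_mem_localization) auto
    ultimately show "z \<in> {a. Fract a 1 \<in> ?I}" by simp
  qed
  then have "ideal_gen_in UNIV ((\<lambda>d. d ^ n) ` ?Y) \<subseteq> {a. Fract a 1 \<in> ?I}"
    by (intro ideal_gen_in_least ideal_in_contraction I)
  moreover have "g = 1 * g" by simp
  then have "g \<in> ideal_gen_in UNIV ((\<lambda>d. d ^ n) ` ?Y)" unfolding g by blast
  ultimately show "?J \<subseteq> ?I"
    using principal_subset_ideal_in[OF I] by blast
qed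

lemma API_on_localization:
  assumes api: "API_on (UNIV :: 'a set)"
  shows "API_on (localization S)"
  unfolding API_on_def
proof (intro allI impI)
  fix X :: "'a fract set"
  assume "X \<noteq> {}" and XL: "X \<subseteq> localization S - {0}"
  let ?Y = "{a. \<exists>s\<in>S. Fract a s \<in> X}"
  obtain x where "x \<in> X" using \<open>X \<noteq> {}\<close> by blast
  moreover obtain a s where "x = Fract a s" "s \<in> S"
    using \<open>x \<in> X\<close> XL localizationE by blast
  ultimately have "?Y \<noteq> {}" by blast
  moreover have "?Y \<subseteq> UNIV - {0}"
    using XL by (auto simp: Zero_fract_def eq_fract(3))
  ultimately obtain n g where "n \<ge> 1"
    and "ideal_gen_in UNIV ((\<lambda>d. d ^ n) ` ?Y) = {r * g | r. r \<in> UNIV}"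
    using api[unfolded API_on_def, rule_format, of ?Y] unfolding principal_in_def by blast
  moreover from this(2) XL
  have "ideal_gen_in (localization S) ((\<lambda>d. d ^ n) ` X) = {r * Fract g 1 | r. r \<in> localization S}"
    by (intro localization_ideal_gen_in_powers) auto
  ultimately show "\<exists>n\<ge>1. principal_in (localization S) (ideal_gen_in (localization S) ((\<lambda>d. d ^ n) ` X))"
    unfolding principal_in_def using Fract_1_mem_localization by blast
qed

lemma quasilocal_on_localization:
  assumes api: "API_on (UNIV :: 'a set)" and q: "quasilocal_on (UNIV :: 'a set)"
  shows "quasilocal_on (localization S)"
  unfolding quasilocal_on_iff_nonunits_ideal[OF subsemiring_in_localization]
proof (rule nonunits_ideal_if_add_closed[OF subsemiring_in_localization])
  fix x y assume x: "x \<in> nonunits_in (localization S)" and y: "y \<in> nonunits_in (localization S)"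
  then obtain a s b t where abst: "x = Fract a s" "s \<in> S" "y = Fract b t" "t \<in> S"
    by (auto simp: nonunits_in_def elim!: localizationE)
  then have "\<forall>u\<in>S. \<not> a dvd u" "\<forall>u\<in>S. \<not> b dvd u"
    using x y Fract_nonunit_iff by auto
  then have "\<forall>u\<in>S. \<not> (a * t + b * s) dvd u"
    by (rule API_quasilocal_not_dvd_mult_closed_add[OF api q S])
  moreover have "x + y = Fract (a * t + b * s) (s * t)"
    using abst denominator_nonzero by simp
  moreover have "s * t \<in> S" using S abst by (simp add: mult_closed_def)
  ultimately show "x + y \<in> nonunits_in (localization S)"
    by (simp add: Fract_nonunit_iff)
qed

end

theorem theorem4:
  fixes S :: "'a::idom set"
  assumes "API_on (UNIV :: 'a set)"
    and "mult_closed S" and "0 \<notin> S"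
  shows "API_on (localization S) \<and>
         (quasilocal_on (UNIV :: 'a set) \<longrightarrow> quasilocal_on (localization S))"
  using API_on_localization quasilocal_on_localization assms by blast

end
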